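(* Let $\mathbf{r}=(r_1,\dots,r_n)$ be a vector of positive integers. Then $$\sum_{\sigma\in\mathfrak{S}^{\mathbf{r}}_n}q^{\mathrm{maj}(\sigma)}=[n]!\cdot\prod_{i=1}^n\big(1+(r_i-1)\,q\big).$$
   Context: For $1\le i\le n$ let $S_i=\{-1\}\cup\{2,3,\dots,r_i\}$ (a set of size $r_i$). An $\mathbf{r}$-signed permutation is a list $\sigma=(\sigma_1,\dots,\sigma_{n+1})=((j_1,\pi_1),(j_2,\pi_2),\dots,(j_n,\pi_n),0)$ where $\pi_1\cdots\pi_n$ is a permutation of $\{1,\dots,n\}$ and $j_k\in S_{\pi_k}$ for each $k$; $\mathfrak{S}^{\mathbf{r}}_n$ denotes the set of these. The entries lie in $\Lambda=\{(j,i):1\le i\le n,\ j\in S_i\}\cup\{0\}$, linearly ordered as follows: pairs are compared lexicographically (first by $j$, then by $i$), and $0<(j,i)$ if and only if $j>0$. The descent set is $\mathrm{Des}(\sigma)=\{k\in\{1,\dots,n\}:\sigma_k>\sigma_{k+1}\}$ and $\mathrm{maj}(\sigma)=\sum_{k\in\mathrm{Des}(\sigma)}k$. $[m]=1+q+\cdots+q^{m-1}$ and $[n]!=[n][n-1]\cdots[1]$. *)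

theory Defs
  imports Main "HOL-Combinatorics.Multiset_Permutations"
begin

text \<open>Entries of Lambda: None encodes the entry 0, Some (j,i) encodes the pair (j,i).\<close>
type_synonym entry = "(int \<times> nat) option"

definition Sset :: "(nat \<Rightarrow> nat) \<Rightarrow> nat \<Rightarrow> int set" where
  "Sset r i = {-1} \<union> {2..int (r i)}"

definition lam_less :: "entry \<Rightarrow> entry \<Rightarrow> bool" where
  "lam_less x y = (case (x, y) of
      (None, None) \<Rightarrow> False
    | (None, Some (j, i)) \<Rightarrow> j > 0
    | (Some (j, i), None) \<Rightarrow> \<not> (j > 0)
    | (Some (j1, i1), Some (j2, i2)) \<Rightarrow> j1 < j2 \<or> (j1 = j2 \<and> i1 < i2))"

text \<open>r-signed permutations as lists of length n+1 (sigma_k = sigma ! (k-1)).\<close>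
definition signed_perms :: "(nat \<Rightarrow> nat) \<Rightarrow> nat \<Rightarrow> entry list set" where
  "signed_perms r n = {map Some (zip js p) @ [None] | js p.
       p \<in> permutations_of_set {1..n} \<and> length js = n \<and>
       (\<forall>k<n. js ! k \<in> Sset r (p ! k))}"

definition Des :: "entry list \<Rightarrow> nat set" where
  "Des \<sigma> = {k \<in> {1..length \<sigma> - 1}. lam_less (\<sigma> ! k) (\<sigma> ! (k - 1))}"

definition maj :: "entry list \<Rightarrow> nat" where
  "maj \<sigma> = \<Sum> (Des \<sigma>)"

definition qint :: "'a::comm_ring_1 \<Rightarrow> nat \<Rightarrow> 'a" where
  "qint q m = (\<Sum>k<m. q ^ k)"

definition qfact :: "'a::comm_ring_1 \<Rightarrow> nat \<Rightarrow> 'a" where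
  "qfact q n = (\<Prod>m=1..n. qint q m)"

end

theory Submission
  imports Defs "HOL-Library.Product_Lexorder" "HOL-Library.FuncSet"
begin

text \<open>Split a signed permutation into its signs, a function c on {1..n}, and its underlying
permutation p.  Since no letter has sign 0, the order of \<Lambda> becomes the lexicographic order on
the pairs (c i, i), with the final letter 0 read as (0, 0).  For a fixed c the problem is thus a
q-count of maj over all arrangements p of a finite set B of a linear order followed by a fixed
z \<notin> B; removing the last letter x of p lowers maj by |B| exactly when z < x, and the resulting
exponents #{b \<in> B. x < b} + |B|[z < x] run through m, ..., m + |B| - 1 with m = #{b \<in> B. z < b}.
Induction gives q^m [|B|]!, and summing over c factorises into the product over i.\<close>

definition list_des :: "'a::linorder list \<Rightarrow> nat set" where
  "list_des xs = {k \<in> {1..length xs - 1}. xs ! k < xs ! (k - 1)}"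

definition list_maj :: "'a::linorder list \<Rightarrow> nat" where
  "list_maj xs = \<Sum>(list_des xs)"

lemma list_des_snoc:
  "list_des (xs @ [b]) = list_des xs \<union> (if xs \<noteq> [] \<and> b < last xs then {length xs} else {})"
  by (cases xs rule: rev_cases) (auto simp: list_des_def nth_append)

lemma list_maj_snoc:
  "list_maj (xs @ [b]) = list_maj xs + (if xs \<noteq> [] \<and> b < last xs then length xs else 0)"
proof -
  have "finite (list_des xs)" "length xs \<notin> list_des xs"
    by (auto simp: list_des_def)
  then show ?thesis
    by (simp add: list_maj_def list_des_snoc)
qed

lemma sum_power_atLeastLessThan: "(\<Sum>k\<in>{m..<m + n}. q ^ k) = q ^ m * qint q n"
  using sum.shift_bounds_nat_ivl[of "power q" 0 m n]
  by (simp add: qint_def atLeast0LessThan sum_distrib_left power_add add.commute mult.commute)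

lemma bij_betw_insertion_exponent:
  fixes B :: "'a::linorder set"
  assumes fin: "finite B" and z: "z \<notin> B"
  defines "m \<equiv> card {b\<in>B. z < b}"
  shows "bij_betw (\<lambda>x. card {b\<in>B. x < b} + (if z < x then card B else 0)) B {m..<m + card B}"
    (is "bij_betw ?e B _")
proof (rule bij_betw_imageI)
  have above: "card {b\<in>B. x < b} < card B" if "x \<in> B" for x
    using that fin by (intro psubset_card_mono) auto
  show "inj_on ?e B"
  proof (rule linorder_inj_onI')
    fix x y assume xy: "x \<in> B" "y \<in> B" "x < y"
    have "{b\<in>B. y < b} \<subset> {b\<in>B. x < b}"
      using xy by auto
    then have "card {b\<in>B. y < b} < card {b\<in>B. x < b}"
      using fin by (intro psubset_card_mono) auto
    then show "?e x \<noteq> ?e y"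
      using above[OF xy(1)] above[OF xy(2)] xy(3) by (auto split: if_splits)
  qed
  have "?e ` B \<subseteq> {m..<m + card B}"
  proof
    fix y assume "y \<in> ?e ` B"
    then obtain x where x: "x \<in> B" "y = ?e x" by blast
    show "y \<in> {m..<m + card B}"
    proof (cases "z < x")
      case True
      have "{b\<in>B. x < b} \<subset> {b\<in>B. z < b}"
        using True x(1) by auto
      then have "card {b\<in>B. x < b} < m"
        unfolding m_def using fin by (intro psubset_card_mono) auto
      moreover have "m \<le> card B"
        unfolding m_def using fin by (intro card_mono) auto
      ultimately show ?thesis
        using True x(2) by simp
    next
      case False
      then have "x < z" using x(1) z by (cases "x = z") auto
      then have "{b\<in>B. z < b} \<subseteq> {b\<in>B. x < b}"
        by auto
      then have "m \<le> card {b\<in>B. x < b}"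
        unfolding m_def using fin by (intro card_mono) auto
      then show ?thesis
        using False x above[OF x(1)] by simp
    qed
  qed
  moreover have "card (?e ` B) = card {m..<m + card B}"
    using \<open>inj_on ?e B\<close> by (simp add: card_image)
  ultimately show "?e ` B = {m..<m + card B}"
    by (intro card_subset_eq) auto
qed

lemma sum_power_insertion_exponent:
  fixes B :: "'a::linorder set"
  assumes "finite B" and "z \<notin> B"
  shows "(\<Sum>x\<in>B. q ^ (card {b\<in>B. x < b} + (if z < x then card B else 0)))
         = q ^ card {b\<in>B. z < b} * qint q (card B)"
  using sum.reindex_bij_betw[OF bij_betw_insertion_exponent[OF assms], of "power q"]
  by (simp add: sum_power_atLeastLessThan)

lemma sum_permutations_of_set_snoc:
  assumes "finite A" and "A \<noteq> {}"
  shows "(\<Sum>p\<in>permutations_of_set A. h p)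
         = (\<Sum>x\<in>A. \<Sum>p\<in>permutations_of_set (A - {x}). h (p @ [x]))"
proof -
  have "(\<Sum>p\<in>permutations_of_set A. h p) = (\<Sum>p\<in>permutations_of_set A. h (rev p))"
    by (subst rev_permutations_of_set[symmetric], subst sum.reindex) (auto intro: inj_onI)
  also have "\<dots> = (\<Sum>x\<in>A. \<Sum>p\<in>permutations_of_set (A - {x}). h (rev (x # p)))"
    unfolding permutations_of_set_nonempty[OF assms(2)] using assms(1)
    by (subst sum.UNION_disjoint) (auto simp: sum.reindex)
  also have "\<dots> = (\<Sum>x\<in>A. \<Sum>p\<in>permutations_of_set (A - {x}). h (p @ [x]))"
    by (subst (2) rev_permutations_of_set[symmetric], subst sum.reindex) (auto intro: inj_onI)
  finally show ?thesis .
qed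

lemma qfact_Suc: "qfact q (Suc n) = qfact q n * qint q (Suc n)"
  by (simp add: qfact_def)

lemma sum_permutations_of_set_maj_snoc:
  fixes B :: "'a::linorder set" and q :: "'b::comm_ring_1"
  assumes "finite B" and "z \<notin> B"
  shows "(\<Sum>p\<in>permutations_of_set B. q ^ list_maj (p @ [z]))
         = q ^ card {b\<in>B. z < b} * qfact q (card B)"
  using assms
proof (induction "card B" arbitrary: B z)
  case 0
  then show ?case by (simp add: list_maj_def list_des_def qfact_def)
next
  case (Suc n)
  have last_step: "list_maj (p @ [x, z])
      = list_maj (p @ [x]) + (if z < x then card B else 0)"
    if "p \<in> permutations_of_set (B - {x})" "x \<in> B" for p x
    using that Suc.hyps(2) Suc.prems(1) list_maj_snoc[of "p @ [x]" z]
    by (simp add: length_finite_permutations_of_set)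
  have "(\<Sum>p\<in>permutations_of_set B. q ^ list_maj (p @ [z]))
      = (\<Sum>x\<in>B. \<Sum>p\<in>permutations_of_set (B - {x}). q ^ list_maj (p @ [x, z]))"
    using Suc by (subst sum_permutations_of_set_snoc) auto
  also have "\<dots> = (\<Sum>x\<in>B. (\<Sum>p\<in>permutations_of_set (B - {x}). q ^ list_maj (p @ [x]))
                         * q ^ (if z < x then card B else 0))"
    by (intro sum.cong refl) (simp add: last_step power_add sum_distrib_right)
  also have "\<dots> = (\<Sum>x\<in>B. qfact q n * q ^ (card {b\<in>B. x < b} + (if z < x then card B else 0)))"
  proof (intro sum.cong refl)
    fix x assume x: "x \<in> B"
    have "card (B - {x}) = n" "{b\<in>B - {x}. x < b} = {b\<in>B. x < b}"
      using Suc.hyps(2) Suc.prems(1) x by auto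
    then have "(\<Sum>p\<in>permutations_of_set (B - {x}). q ^ list_maj (p @ [x]))
        = q ^ card {b\<in>B. x < b} * qfact q n"
      using Suc.hyps(1)[of "B - {x}" x] Suc.prems(1) by simp
    then show "(\<Sum>p\<in>permutations_of_set (B - {x}). q ^ list_maj (p @ [x])) * q ^ (if z < x then card B else 0)
        = qfact q n * q ^ (card {b\<in>B. x < b} + (if z < x then card B else 0))"
      by (simp add: power_add mult_ac)
  qed
  also have "\<dots> = q ^ card {b\<in>B. z < b} * qfact q (card B)"
    by (simp add: sum_distrib_left[symmetric] sum_power_insertion_exponent Suc.prems
                  Suc.hyps(2)[symmetric] qfact_Suc mult_ac)
  finally show ?case .
qed

definition entry_key :: "entry \<Rightarrow> int \<times> nat" where
  "entry_key x = (case x of None \<Rightarrow> (0, 0) | Some e \<Rightarrow> e)"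

text \<open>Reading 0 as (0, 0) respects the order of \<Lambda> only because no pair in \<Lambda> has
first component 0.\<close>

lemma lam_less_entry_key:
  assumes "\<forall>i. x \<noteq> Some (0, i)" and "\<forall>i. y \<noteq> Some (0, i)"
  shows "lam_less x y \<longleftrightarrow> entry_key x < entry_key y"
  using assms by (cases x; cases y) (auto simp: lam_less_def entry_key_def less_prod_def)

lemma Des_eq_list_des:
  fixes g :: "entry \<Rightarrow> 'a::linorder"
  assumes "\<forall>x\<in>set \<sigma>. \<forall>y\<in>set \<sigma>. lam_less x y \<longleftrightarrow> g x < g y"
  shows "Des \<sigma> = list_des (map g \<sigma>)"
  using assms by (auto simp: Des_def list_des_def)

definition signed_word :: "(nat \<Rightarrow> int) \<Rightarrow> nat list \<Rightarrow> entry list" where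
  "signed_word c p = map (\<lambda>i. Some (c i, i)) p @ [None]"

lemma maj_signed_word:
  assumes "\<forall>i\<in>set p. c i \<noteq> 0"
  shows "maj (signed_word c p) = list_maj (map (\<lambda>i. (c i, i)) p @ [(0, 0)])"
proof -
  have "Des (signed_word c p) = list_des (map entry_key (signed_word c p))"
    using assms by (intro Des_eq_list_des) (auto simp: signed_word_def lam_less_entry_key)
  then show ?thesis
    by (simp add: maj_def list_maj_def signed_word_def entry_key_def comp_def)
qed

lemma sum_permutations_maj_signed_word:
  fixes q :: "'a::comm_ring_1"
  assumes c: "\<forall>i\<in>{1..n}. c i \<noteq> 0"
  shows "(\<Sum>p\<in>permutations_of_set {1..n}. q ^ maj (signed_word c p))
         = qfact q n * (\<Prod>i=1..n. if 0 < c i then q else 1)"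
proof -
  define g where "g = (\<lambda>i. (c i, i))"
  have inj_g: "inj g"
    by (auto simp: g_def intro: injI)
  have "(\<Sum>p\<in>permutations_of_set {1..n}. q ^ maj (signed_word c p))
      = (\<Sum>p\<in>permutations_of_set {1..n}. q ^ list_maj (map g p @ [(0, 0)]))"
    using c by (intro sum.cong refl) (auto simp: maj_signed_word g_def permutations_of_set_def)
  also have "\<dots> = (\<Sum>p\<in>permutations_of_set (g ` {1..n}). q ^ list_maj (p @ [(0, 0)]))"
    using inj_g by (simp add: permutations_of_set_image_inj sum.reindex inj_on_subset[OF _ subset_UNIV])
  also have "\<dots> = q ^ card {b\<in>g ` {1..n}. (0, 0) < b} * qfact q n"
    using inj_g by (subst sum_permutations_of_set_maj_snoc) (auto simp: g_def card_image inj_on_subset)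
  also have "{b\<in>g ` {1..n}. (0, 0) < b} = g ` {i\<in>{1..n}. 0 < c i}"
    using c by (auto simp: g_def less_prod_def)
  also have "q ^ card (g ` {i\<in>{1..n}. 0 < c i}) = (\<Prod>i=1..n. if 0 < c i then q else 1)"
    using inj_g by (simp add: card_image inj_on_subset prod.inter_filter[symmetric])
  finally show ?thesis
    by (simp add: mult.commute)
qed

lemma signed_word_mem_signed_perms:
  assumes c: "c \<in> PiE {1..n} (Sset r)" and p: "p \<in> permutations_of_set {1..n}"
  shows "signed_word c p \<in> signed_perms r n"
proof -
  have len_p: "length p = n" and "set p = {1..n}"
    using p length_finite_permutations_of_set[OF p] by (auto simp: permutations_of_set_def)
  then have "\<forall>k<n. map c p ! k \<in> Sset r (p ! k)"
    using c by (auto simp: PiE_iff)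
  moreover have "signed_word c p = map Some (zip (map c p) p) @ [None]"
    unfolding signed_word_def by (auto intro: nth_equalityI)
  ultimately show ?thesis
    unfolding signed_perms_def using p len_p
    by (intro CollectI exI[of _ "map c p"] exI[of _ p]) simp
qed

lemma signed_perms_eq_image_signed_word:
  "signed_perms r n = (\<lambda>(c, p). signed_word c p) ` (PiE {1..n} (Sset r) \<times> permutations_of_set {1..n})"
proof (rule equalityI)
  show "signed_perms r n \<subseteq> (\<lambda>(c, p). signed_word c p) ` (PiE {1..n} (Sset r) \<times> permutations_of_set {1..n})"
  proof
    fix \<sigma> assume "\<sigma> \<in> signed_perms r n"
    then obtain js p where \<sigma>: "\<sigma> = map Some (zip js p) @ [None]"
      and p: "p \<in> permutations_of_set {1..n}" and len_js: "length js = n"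
      and js: "\<forall>k<n. js ! k \<in> Sset r (p ! k)"
      unfolding signed_perms_def by blast
    have len_p: "length p = n" and "distinct p" and set_p: "set p = {1..n}"
      using p length_finite_permutations_of_set[OF p] by (auto simp: permutations_of_set_def)
    define c where "c i = (if i \<in> {1..n} then the (map_of (zip p js) i) else undefined)" for i
    have c_nth: "c (p ! k) = js ! k" if "k < n" for k
      using that len_p len_js set_p \<open>distinct p\<close> nth_mem[of k p]
      by (auto simp: c_def map_of_zip_nth)
    have \<sigma>_eq: "\<sigma> = signed_word c p"
      unfolding \<sigma> signed_word_def by (auto intro: nth_equalityI simp: len_p len_js c_nth)
    have "c \<in> PiE {1..n} (Sset r)"
    proof (rule PiE_I)
      fix i assume "i \<in> {1..n}"
      then obtain k where "k < n" "p ! k = i"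
        using set_p len_p by (metis in_set_conv_nth)
      then show "c i \<in> Sset r i"
        using js c_nth by auto
    qed (simp add: c_def; blast)
    with p have "(c, p) \<in> PiE {1..n} (Sset r) \<times> permutations_of_set {1..n}"
      by simp
    then show "\<sigma> \<in> (\<lambda>(c, p). signed_word c p) ` (PiE {1..n} (Sset r) \<times> permutations_of_set {1..n})"
      by (rule rev_image_eqI) (simp add: \<sigma>_eq)
  qed
qed (clarify; rule signed_word_mem_signed_perms; assumption)

lemma bij_betw_signed_word:
  "bij_betw (\<lambda>(c, p). signed_word c p)
     (PiE {1..n} (Sset r) \<times> permutations_of_set {1..n}) (signed_perms r n)"
proof (rule bij_betw_imageI)
  show "inj_on (\<lambda>(c, p). signed_word c p) (PiE {1..n} (Sset r) \<times> permutations_of_set {1..n})"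
  proof (rule inj_onI, clarify)
    fix c p c' p'
    assume c: "c \<in> PiE {1..n} (Sset r)" "c' \<in> PiE {1..n} (Sset r)"
      and p: "p \<in> permutations_of_set {1..n}"
      and eq: "signed_word c p = signed_word c' p'"
    have eq': "map (\<lambda>i. (c i, i)) p = map (\<lambda>i. (c' i, i)) p'"
      using arg_cong[OF eq, of "map the \<circ> butlast"] by (simp add: signed_word_def comp_def)
    then have "map snd (map (\<lambda>i. (c i, i)) p) = map snd (map (\<lambda>i. (c' i, i)) p')"
      by (rule arg_cong)
    then have "p = p'"
      by (simp add: comp_def)
    moreover have "set p = {1..n}"
      using p by (simp add: permutations_of_set_def)
    ultimately have "c = c'"
      using c eq' by (intro PiE_ext) (auto simp: map_eq_conv)
    with \<open>p = p'\<close> show "c = c' \<and> p = p'" by simp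
  qed
qed (rule signed_perms_eq_image_signed_word[symmetric])

lemma finite_Sset: "finite (Sset r i)"
  by (simp add: Sset_def)

lemma sum_Sset_sign_weight:
  "(\<Sum>j\<in>Sset r i. if 0 < j then q else 1) = 1 + of_nat (r i - 1) * (q :: 'a::comm_ring_1)"
proof -
  have "Sset r i = insert (-1) {2..int (r i)}"
    by (auto simp: Sset_def)
  moreover have "(\<Sum>j\<in>{2..int (r i)}. if 0 < j then q else 1) = of_nat (r i - 1) * q"
    by (cases "r i") simp_all
  ultimately show ?thesis
    by simp
qed

theorem mainTheorem9:
  fixes r :: "nat \<Rightarrow> nat" and n :: nat and q :: "'a::comm_ring_1"
  assumes "\<forall>i\<in>{1..n}. r i > 0"
  shows "(\<Sum>\<sigma>\<in>signed_perms r n. q ^ maj \<sigma>)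
         = qfact q n * (\<Prod>i=1..n. 1 + of_nat (r i - 1) * q)"
proof -
  have "(\<Sum>\<sigma>\<in>signed_perms r n. q ^ maj \<sigma>)
      = (\<Sum>c\<in>PiE {1..n} (Sset r). \<Sum>p\<in>permutations_of_set {1..n}. q ^ maj (signed_word c p))"
    by (simp add: sum.reindex_bij_betw[OF bij_betw_signed_word, symmetric]
                  sum.cartesian_product split_def)
  also have "\<dots> = (\<Sum>c\<in>PiE {1..n} (Sset r). qfact q n * (\<Prod>i=1..n. if 0 < c i then q else 1))"
    by (intro sum.cong refl sum_permutations_maj_signed_word) (auto simp: Sset_def PiE_iff)
  also have "\<dots> = qfact q n * (\<Prod>i=1..n. \<Sum>j\<in>Sset r i. if 0 < j then q else 1)"
  proof -
    have "(\<Prod>i=1..n. \<Sum>j\<in>Sset r i. if 0 < j then q else 1)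
        = (\<Sum>c\<in>PiE {1..n} (Sset r). \<Prod>i=1..n. if 0 < c i then q else 1)"
      by (rule prod_sum_PiE) (simp_all add: finite_Sset)
    then show ?thesis
      by (simp add: sum_distrib_left)
  qed
  also have "\<dots> = qfact q n * (\<Prod>i=1..n. 1 + of_nat (r i - 1) * q)"
    by (simp add: sum_Sset_sign_weight)
  finally show ?thesis .
qed

end
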